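(* In the publishing problem, assume the delay cost is global with aggregated delay cost $F^{(d)}$ being $\frac{\sigma}{2}$-sub-additive, and the publishing cost is constant, $C^{(p)}_t(N)=\beta\,\mathbb{1}[N\neq\emptyset]$ (no assumption is made on the price dynamics $R$). Let $\pi$ be the policy $$\pi(t,Q_t,P_t)=\begin{cases}Q_t & \text{if }\gamma^{|Q_t|-1}\beta P_t\le F^{(d)}(|Q_t|+1),\\ \emptyset&\text{otherwise.}\end{cases}$$ Then $C(\pi)\le\sigma\,C(\pi^* )$, where $\pi^*$ is an optimal policy.
   Context: The publishing problem is the following infinite-horizon MDP in discrete time $t=0,1,2,\dots$. At each step $t$ a new transaction $H_t$ is created. The state at time $t$ is $(t,P_t,Q_t)$ with gas price $P_t\ge0$ and set $Q_t$ of unpublished transactions ($Q_0=\emptyset$). A policy $\pi$ chooses $N^\pi_t\subseteq Q_t$ to publish, incurring cost $C_t=P_t\,C^{(p)}_t(N^\pi_t)+C^{(d)}_t(Q_t\setminus N^\pi_t)$; then $Q_{t+1}=(Q_t\setminus N^\pi_t)\cup\{H_t\}$ and $P_{t+1}=R(P_t)$ for a random function $R$. Publishing cost: $C^{(p)}_t(N)=\alpha|N|+\beta\,\mathbb{1}[N\ne\emptyset]$, $\alpha,\beta\ge0$ (here $\alpha=0$). Delay cost: $C^{(d)}_t(N)=\sum_{H_\tau\in N}C^{(d)}_{H_\tau}(t-\tau)$ with non-negative functions $C^{(d)}_{H_\tau}$; it is global if all equal one function $C^{(d)}$. The expected total cost is $C(\pi)=\mathbb{E}[\sum_t\gamma^tC_t]$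 with $0<\gamma<1$; a policy is optimal if it minimizes $C(\pi)$. The aggregated delay cost is $F^{(d)}(n)=\sum_{t=1}^{n-1}\sum_{i=1}^{t}\gamma^{t-1}C^{(d)}(i)$. $F^{(d)}$ is $\sigma'$-sub-additive if for all $n_1,n_2\ge1$: $F^{(d)}(n_1+n_2)\le\sigma'\left(F^{(d)}(n_1+1)+\gamma^{n_1}F^{(d)}(n_2)\right)$. *)

theory Defs
  imports "HOL-Probability.Probability"
begin

text \<open>Transaction H_tau is identified with its creation time tau.\<close>

type_synonym policy = "nat \<Rightarrow> real \<Rightarrow> nat set \<Rightarrow> nat set"

definition valid_policy :: "policy \<Rightarrow> bool" where
  "valid_policy pol \<longleftrightarrow> (\<forall>t p Q. pol t p Q \<subseteq> Q)"

fun price :: "real \<Rightarrow> (nat \<Rightarrow> 'w \<Rightarrow> real \<Rightarrow> real) \<Rightarrow> 'w \<Rightarrow> nat \<Rightarrow> real" where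
  "price P0 R w 0 = P0"
| "price P0 R w (Suc t) = R t w (price P0 R w t)"

fun queue :: "policy \<Rightarrow> (nat \<Rightarrow> real) \<Rightarrow> nat \<Rightarrow> nat set" where
  "queue pol ps 0 = {}"
| "queue pol ps (Suc t) =
     (queue pol ps t - pol t (ps t) (queue pol ps t)) \<union> {t}"

definition pub_cost :: "real \<Rightarrow> nat set \<Rightarrow> real" where
  "pub_cost \<beta> N = (if N \<noteq> {} then \<beta> else 0)"

definition delay_cost :: "(nat \<Rightarrow> real) \<Rightarrow> nat \<Rightarrow> nat set \<Rightarrow> real" where
  "delay_cost Cd t N = (\<Sum>\<tau>\<in>N. Cd (t - \<tau>))"

definition stage_cost :: "real \<Rightarrow> (nat \<Rightarrow> real) \<Rightarrow> policy \<Rightarrow> (nat \<Rightarrow> real) \<Rightarrow> nat \<Rightarrow> real" where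
  "stage_cost \<beta> Cd pol ps t =
     (let Q = queue pol ps t; N = pol t (ps t) Q
      in ps t * pub_cost \<beta> N + delay_cost Cd t (Q - N))"

definition total_cost ::
  "'w measure \<Rightarrow> real \<Rightarrow> (nat \<Rightarrow> 'w \<Rightarrow> real \<Rightarrow> real) \<Rightarrow> real \<Rightarrow> real \<Rightarrow> (nat \<Rightarrow> real)
     \<Rightarrow> policy \<Rightarrow> ennreal" where
  "total_cost M P0 R \<beta> \<gamma> Cd pol =
     (\<integral>\<^sup>+ w. (\<Sum>t. ennreal (\<gamma> ^ t * stage_cost \<beta> Cd pol (price P0 R w) t)) \<partial>M)"

definition optimal_policy ::
  "'w measure \<Rightarrow> real \<Rightarrow> (nat \<Rightarrow> 'w \<Rightarrow> real \<Rightarrow> real) \<Rightarrow> real \<Rightarrow> real \<Rightarrow> (nat \<Rightarrow> real)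
     \<Rightarrow> policy \<Rightarrow> bool" where
  "optimal_policy M P0 R \<beta> \<gamma> Cd pol \<longleftrightarrow> valid_policy pol \<and>
     (\<forall>pol'. valid_policy pol' \<longrightarrow> total_cost M P0 R \<beta> \<gamma> Cd pol \<le> total_cost M P0 R \<beta> \<gamma> Cd pol')"

definition agg_delay :: "real \<Rightarrow> (nat \<Rightarrow> real) \<Rightarrow> nat \<Rightarrow> real" where
  "agg_delay \<gamma> Cd n = (\<Sum>t = 1..<n. \<Sum>i = 1..t. \<gamma> ^ (t - 1) * Cd i)"

definition sub_additive :: "real \<Rightarrow> real \<Rightarrow> (nat \<Rightarrow> real) \<Rightarrow> bool" where
  "sub_additive \<sigma>' \<gamma> F \<longleftrightarrow> (\<forall>n1 n2. n1 \<ge> 1 \<longrightarrow> n2 \<ge> 1 \<longrightarrow>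
     F (n1 + n2) \<le> \<sigma>' * (F (n1 + 1) + \<gamma> ^ n1 * F n2))"

definition threshold_policy :: "real \<Rightarrow> real \<Rightarrow> (nat \<Rightarrow> real) \<Rightarrow> policy" where
  "threshold_policy \<beta> \<gamma> Cd t p Q =
     (if \<gamma> ^ (card Q - 1) * \<beta> * p \<le> agg_delay \<gamma> Cd (card Q + 1) then Q else {})"

end

theory Submission
  imports Defs
begin

text \<open>
  The bound holds pathwise and against every policy.  The threshold policy always
  publishes its whole queue, so its run splits into epochs between consecutive publications.
  In an epoch (s, N] it pays the delay cost \<gamma>^(s+1) F(N - s) and, at time N, one publication,
  which its rule bounds by \<gamma>^(s+1) F(N - s + 1).  On the same window any other policy either
  never publishes, paying at least the same delay cost, or, with j its last publication there,
  pays the publication at j plus the delay from j on.  As the threshold policy did not publish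
  at j, that publication costs more than \<gamma>^(s+1) F(j - s + 1), and (\<sigma>/2)-sub-additivity
  combines the two parts.  For \<sigma> < 2, sub-additivity forces F = 0 and the threshold policy
  costs nothing.
\<close>

definition cum_delay :: "(nat \<Rightarrow> real) \<Rightarrow> nat \<Rightarrow> real" where
  "cum_delay Cd n = (\<Sum>i = 1..n. Cd i)"

lemma agg_delay_eq_sum_cum_delay:
  "agg_delay \<gamma> Cd n = (\<Sum>t = 1..<n. \<gamma> ^ (t - 1) * cum_delay Cd t)"
  unfolding agg_delay_def cum_delay_def by (simp add: sum_distrib_left)

lemma delay_cost_atLeastLessThan:
  assumes "k \<le> t"
  shows "delay_cost Cd t {k..<t} = cum_delay Cd (t - k)"
  unfolding delay_cost_def cum_delay_def
  by (rule sum.reindex_bij_witness[of _ "\<lambda>i. t - i" "\<lambda>\<tau>. t - \<tau>"]) (use assms in auto)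

lemma sum_discounted_cum_delay:
  "(\<Sum>t = Suc k..<M. \<gamma> ^ t * cum_delay Cd (t - k)) = \<gamma> ^ Suc k * agg_delay \<gamma> Cd (M - k)"
proof (cases "k \<le> M")
  case True
  have "(\<Sum>t = Suc k..<M. \<gamma> ^ t * cum_delay Cd (t - k))
      = (\<Sum>t = 1..<M - k. \<gamma> ^ (t + k) * cum_delay Cd t)"
    using True sum.shift_bounds_nat_ivl[of "\<lambda>t. \<gamma> ^ t * cum_delay Cd (t - k)" 1 k "M - k"] by simp
  also have "\<dots> = \<gamma> ^ Suc k * agg_delay \<gamma> Cd (M - k)"
    unfolding agg_delay_eq_sum_cum_delay sum_distrib_left
    by (rule sum.cong) (auto simp: add.commute simp flip: power_Suc power_add)
  finally show ?thesis .
qed (simp add: agg_delay_def)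

lemma queue_subset_lessThan: "queue pol ps t \<subseteq> {..<t}"
  by (induction t) auto

lemma finite_queue [simp]: "finite (queue pol ps t)"
  by (rule finite_subset[OF queue_subset_lessThan]) simp

lemma atLeastLessThan_subset_queue:
  assumes "\<And>u. k < u \<Longrightarrow> u < t \<Longrightarrow> pol u (ps u) (queue pol ps u) = {}"
  shows "{k..<t} \<subseteq> queue pol ps t"
  using assms by (induction t) (auto simp: less_Suc_eq)

text \<open>The last publication time of the threshold policy before \<open>t\<close> (0 if there is none).\<close>

fun queue_start :: "real \<Rightarrow> real \<Rightarrow> (nat \<Rightarrow> real) \<Rightarrow> (nat \<Rightarrow> real) \<Rightarrow> nat \<Rightarrow> nat" where
  "queue_start \<beta> \<gamma> Cd ps 0 = 0"
| "queue_start \<beta> \<gamma> Cd ps (Suc t) =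
    (let s = queue_start \<beta> \<gamma> Cd ps t
     in if \<gamma> ^ (t - s - 1) * \<beta> * ps t \<le> agg_delay \<gamma> Cd (t - s + 1) then t else s)"

declare queue_start.simps(2) [simp del]

lemma queue_start_le: "queue_start \<beta> \<gamma> Cd ps t \<le> t"
  by (induction t) (auto simp: queue_start.simps(2) Let_def)

lemma queue_start_Suc_le: "queue_start \<beta> \<gamma> Cd ps (Suc t) \<le> t"
  using queue_start_le[of \<beta> \<gamma> Cd ps t] by (auto simp: queue_start.simps(2) Let_def)

lemma queue_start_less: "0 < t \<Longrightarrow> queue_start \<beta> \<gamma> Cd ps t < t"
  using queue_start_Suc_le[of \<beta> \<gamma> Cd ps "t - 1"] by simp

lemma queue_start_eq_between:
  assumes "queue_start \<beta> \<gamma> Cd ps t = s" and "s < u" and "u \<le> t"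
  shows "queue_start \<beta> \<gamma> Cd ps u = s"
  using assms by (induction t) (auto simp: queue_start.simps(2) Let_def le_Suc_eq split: if_splits)

lemma queue_threshold_policy:
  "queue (threshold_policy \<beta> \<gamma> Cd) ps t = {queue_start \<beta> \<gamma> Cd ps t..<t}"
proof (induction t)
  case (Suc t)
  define s where "s = queue_start \<beta> \<gamma> Cd ps t"
  have "s \<le> t"
    unfolding s_def by (rule queue_start_le)
  have card: "card {s..<t} = t - s"
    by simp
  have queue: "queue (threshold_policy \<beta> \<gamma> Cd) ps t = {s..<t}"
    unfolding s_def by (rule Suc)
  show ?case
  proof (cases "\<gamma> ^ (t - s - 1) * \<beta> * ps t \<le> agg_delay \<gamma> Cd (t - s + 1)")
    case True
    then have "threshold_policy \<beta> \<gamma> Cd t (ps t) {s..<t} = {s..<t}"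
      unfolding threshold_policy_def card by simp
    then show ?thesis
      using True unfolding queue.simps queue by (simp add: queue_start.simps(2) s_def[symmetric])
  next
    case False
    then have "threshold_policy \<beta> \<gamma> Cd t (ps t) {s..<t} = {}"
      unfolding threshold_policy_def card by simp
    then show ?thesis
      using False \<open>s \<le> t\<close> unfolding queue.simps queue
      by (simp add: queue_start.simps(2) s_def[symmetric] atLeastLessThanSuc)
  qed
qed simp

lemma stage_cost_threshold_policy_idle:
  assumes "queue_start \<beta> \<gamma> Cd ps t = t"
  shows "stage_cost \<beta> Cd (threshold_policy \<beta> \<gamma> Cd) ps t = 0"
  using assms
  by (simp add: stage_cost_def queue_threshold_policy threshold_policy_def pub_cost_def
      delay_cost_def)

lemma stage_cost_threshold_policy_waits:
  assumes "queue_start \<beta> \<gamma> Cd ps t = s" and "queue_start \<beta> \<gamma> Cd ps (Suc t) = s" and "s < t"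
  shows "agg_delay \<gamma> Cd (t - s + 1) < \<gamma> ^ (t - s - 1) * \<beta> * ps t"
    and "stage_cost \<beta> Cd (threshold_policy \<beta> \<gamma> Cd) ps t = cum_delay Cd (t - s)"
proof -
  show "agg_delay \<gamma> Cd (t - s + 1) < \<gamma> ^ (t - s - 1) * \<beta> * ps t"
    using assms by (auto simp: queue_start.simps(2) Let_def split: if_splits)
  then show "stage_cost \<beta> Cd (threshold_policy \<beta> \<gamma> Cd) ps t = cum_delay Cd (t - s)"
    using assms
    by (simp add: stage_cost_def queue_threshold_policy threshold_policy_def pub_cost_def
        delay_cost_atLeastLessThan)
qed

lemma stage_cost_threshold_policy_publishes:
  assumes "queue_start \<beta> \<gamma> Cd ps t = s" and "queue_start \<beta> \<gamma> Cd ps (Suc t) = t" and "s < t"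
  shows "\<gamma> ^ (t - s - 1) * \<beta> * ps t \<le> agg_delay \<gamma> Cd (t - s + 1)"
    and "stage_cost \<beta> Cd (threshold_policy \<beta> \<gamma> Cd) ps t = ps t * \<beta>"
proof -
  show "\<gamma> ^ (t - s - 1) * \<beta> * ps t \<le> agg_delay \<gamma> Cd (t - s + 1)"
    using assms by (auto simp: queue_start.simps(2) Let_def split: if_splits)
  then show "stage_cost \<beta> Cd (threshold_policy \<beta> \<gamma> Cd) ps t = ps t * \<beta>"
    using assms
    by (simp add: stage_cost_def queue_threshold_policy threshold_policy_def pub_cost_def
        delay_cost_def)
qed

lemma power_Suc_mult_power_diff:
  fixes x :: "'a :: monoid_mult"
  assumes "s < j"
  shows "x ^ Suc s * x ^ (j - s - 1) = x ^ j"
proof -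
  have "Suc s + (j - s - 1) = j"
    using assms by simp
  then show ?thesis
    by (metis power_add)
qed

definition window_cost ::
  "real \<Rightarrow> real \<Rightarrow> (nat \<Rightarrow> real) \<Rightarrow> policy \<Rightarrow> (nat \<Rightarrow> real) \<Rightarrow> nat \<Rightarrow> nat \<Rightarrow> real" where
  "window_cost \<beta> \<gamma> Cd pol ps m n = (\<Sum>t = m..<n. \<gamma> ^ t * stage_cost \<beta> Cd pol ps t)"

lemma window_cost_split:
  "m \<le> n \<Longrightarrow> n \<le> k \<Longrightarrow>
    window_cost \<beta> \<gamma> Cd pol ps m k = window_cost \<beta> \<gamma> Cd pol ps m n + window_cost \<beta> \<gamma> Cd pol ps n k"
  unfolding window_cost_def by (simp add: sum.atLeastLessThan_concat)

lemma window_cost_Suc: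
  "m \<le> n \<Longrightarrow>
    window_cost \<beta> \<gamma> Cd pol ps m (Suc n) = window_cost \<beta> \<gamma> Cd pol ps m n + \<gamma> ^ n * stage_cost \<beta> Cd pol ps n"
  unfolding window_cost_def by simp

lemma window_cost_threshold_policy_waits:
  assumes "s < N" and "\<And>u. s < u \<Longrightarrow> u \<le> N \<Longrightarrow> queue_start \<beta> \<gamma> Cd ps u = s"
  shows "window_cost \<beta> \<gamma> Cd (threshold_policy \<beta> \<gamma> Cd) ps (Suc s) N = \<gamma> ^ Suc s * agg_delay \<gamma> Cd (N - s)"
proof -
  have "window_cost \<beta> \<gamma> Cd (threshold_policy \<beta> \<gamma> Cd) ps (Suc s) N
      = (\<Sum>t = Suc s..<N. \<gamma> ^ t * cum_delay Cd (t - s))"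
    unfolding window_cost_def
  proof (intro sum.cong refl)
    fix t
    assume "t \<in> {Suc s..<N}"
    then have "queue_start \<beta> \<gamma> Cd ps t = s" and "queue_start \<beta> \<gamma> Cd ps (Suc t) = s" and "s < t"
      by (auto intro!: assms(2))
    then show "\<gamma> ^ t * stage_cost \<beta> Cd (threshold_policy \<beta> \<gamma> Cd) ps t = \<gamma> ^ t * cum_delay Cd (t - s)"
      by (simp add: stage_cost_threshold_policy_waits(2))
  qed
  then show ?thesis
    by (simp add: sum_discounted_cum_delay)
qed

lemma sub_additive_discounted:
  assumes "sub_additive c \<gamma> F" and "0 \<le> \<gamma>" and "s < j" and "j < M"
  shows "\<gamma> ^ Suc s * F (M - s) \<le> c * (\<gamma> ^ Suc s * F (j - s + 1) + \<gamma> ^ Suc j * F (M - j))"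
proof -
  have sub: "\<And>n1 n2. 1 \<le> n1 \<Longrightarrow> 1 \<le> n2 \<Longrightarrow> F (n1 + n2) \<le> c * (F (n1 + 1) + \<gamma> ^ n1 * F n2)"
    using assms(1) unfolding sub_additive_def by blast
  have "F ((j - s) + (M - j)) \<le> c * (F ((j - s) + 1) + \<gamma> ^ (j - s) * F (M - j))"
    using assms(3,4) by (intro sub) simp_all
  moreover have "(j - s) + (M - j) = M - s" and "\<gamma> ^ Suc s * \<gamma> ^ (j - s) = \<gamma> ^ Suc j"
    using assms by (simp_all flip: power_add)
  ultimately show ?thesis
    using assms mult_left_mono[of _ _ "\<gamma> ^ Suc s"] by (fastforce simp: algebra_simps)
qed

context
  fixes \<beta> \<gamma> :: real and Cd ps :: "nat \<Rightarrow> real"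
  assumes \<beta>_nonneg: "0 \<le> \<beta>" and \<gamma>_pos: "0 < \<gamma>"
    and Cd_nonneg: "\<And>i. 0 \<le> Cd i" and ps_nonneg: "\<And>t. 0 \<le> ps t"
begin

lemma cum_delay_nonneg: "0 \<le> cum_delay Cd n"
  unfolding cum_delay_def by (simp add: Cd_nonneg sum_nonneg)

lemma agg_delay_mono: "n \<le> m \<Longrightarrow> agg_delay \<gamma> Cd n \<le> agg_delay \<gamma> Cd m"
  unfolding agg_delay_eq_sum_cum_delay
  using \<gamma>_pos by (intro sum_mono2) (auto intro!: mult_nonneg_nonneg cum_delay_nonneg)

lemma agg_delay_nonneg: "0 \<le> agg_delay \<gamma> Cd n"
  using agg_delay_mono[of 0 n] by (simp add: agg_delay_def)

lemma stage_cost_nonneg: "0 \<le> stage_cost \<beta> Cd pol ps t"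
  unfolding stage_cost_def pub_cost_def delay_cost_def Let_def
  using \<beta>_nonneg ps_nonneg[of t] by (auto intro!: add_nonneg_nonneg sum_nonneg Cd_nonneg)

lemma window_cost_nonneg: "0 \<le> window_cost \<beta> \<gamma> Cd pol ps m n"
  unfolding window_cost_def using \<gamma>_pos
  by (intro sum_nonneg mult_nonneg_nonneg) (auto intro: stage_cost_nonneg)

lemma pub_cost_le_stage_cost:
  assumes "pol t (ps t) (queue pol ps t) \<noteq> {}"
  shows "ps t * \<beta> \<le> stage_cost \<beta> Cd pol ps t"
  unfolding stage_cost_def pub_cost_def delay_cost_def Let_def
  using assms by (auto intro: sum_nonneg Cd_nonneg)

lemma cum_delay_le_stage_cost:
  assumes "pol t (ps t) (queue pol ps t) = {}" and "{k..<t} \<subseteq> queue pol ps t" and "k \<le> t"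
  shows "cum_delay Cd (t - k) \<le> stage_cost \<beta> Cd pol ps t"
proof -
  have "cum_delay Cd (t - k) = delay_cost Cd t {k..<t}"
    using assms(3) by (simp add: delay_cost_atLeastLessThan)
  also have "\<dots> \<le> delay_cost Cd t (queue pol ps t)"
    unfolding delay_cost_def using assms(2) by (intro sum_mono2) (auto intro: Cd_nonneg)
  finally show ?thesis
    unfolding stage_cost_def Let_def pub_cost_def using assms(1) by simp
qed

lemma waiting_window_cost_ge:
  assumes "\<And>t. k < t \<Longrightarrow> t < M \<Longrightarrow> pol t (ps t) (queue pol ps t) = {}"
  shows "\<gamma> ^ Suc k * agg_delay \<gamma> Cd (M - k) \<le> window_cost \<beta> \<gamma> Cd pol ps (Suc k) M"
proof -
  have "(\<Sum>t = Suc k..<M. \<gamma> ^ t * cum_delay Cd (t - k)) \<le> window_cost \<beta> \<gamma> Cd pol ps (Suc k) M"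
    unfolding window_cost_def
  proof (intro sum_mono mult_left_mono)
    fix t
    assume t: "t \<in> {Suc k..<M}"
    then have "{k..<t} \<subseteq> queue pol ps t"
      by (intro atLeastLessThan_subset_queue) (use assms in auto)
    then show "cum_delay Cd (t - k) \<le> stage_cost \<beta> Cd pol ps t"
      using t assms by (intro cum_delay_le_stage_cost) auto
  qed (use \<gamma>_pos in simp)
  then show ?thesis
    by (simp add: sum_discounted_cum_delay)
qed

lemma window_cost_lower_bound:
  assumes "s < M"
  shows "\<gamma> ^ Suc s * agg_delay \<gamma> Cd (M - s) \<le> window_cost \<beta> \<gamma> Cd pol ps (Suc s) M
    \<or> (\<exists>j. s < j \<and> j < M \<and> pol j (ps j) (queue pol ps j) \<noteq> {} \<and>
         \<gamma> ^ j * (ps j * \<beta>) + \<gamma> ^ Suc j * agg_delay \<gamma> Cd (M - j)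
           \<le> window_cost \<beta> \<gamma> Cd pol ps (Suc s) M)"
proof (cases "\<exists>j. s < j \<and> j < M \<and> pol j (ps j) (queue pol ps j) \<noteq> {}")
  case False
  then show ?thesis
    using waiting_window_cost_ge[of s M pol] by blast
next
  case True
  then obtain j where j: "s < j" "j < M" "pol j (ps j) (queue pol ps j) \<noteq> {}"
    and last: "\<And>t. s < t \<Longrightarrow> t < M \<Longrightarrow> pol t (ps t) (queue pol ps t) \<noteq> {} \<Longrightarrow> t \<le> j"
    using Nat.ex_has_greatest_nat[of "\<lambda>j. s < j \<and> j < M \<and> pol j (ps j) (queue pol ps j) \<noteq> {}" _ M]
    by (metis less_imp_le)
  have "window_cost \<beta> \<gamma> Cd pol ps (Suc s) M
      = window_cost \<beta> \<gamma> Cd pol ps (Suc s) j + \<gamma> ^ j * stage_cost \<beta> Cd pol ps j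
        + window_cost \<beta> \<gamma> Cd pol ps (Suc j) M"
    using j by (simp add: window_cost_split[of "Suc s" "Suc j" M] window_cost_Suc)
  moreover have "\<gamma> ^ j * (ps j * \<beta>) \<le> \<gamma> ^ j * stage_cost \<beta> Cd pol ps j"
    using j(3) \<gamma>_pos by (simp add: pub_cost_le_stage_cost)
  moreover have "\<gamma> ^ Suc j * agg_delay \<gamma> Cd (M - j) \<le> window_cost \<beta> \<gamma> Cd pol ps (Suc j) M"
    using last j by (intro waiting_window_cost_ge) (meson less_trans not_le)
  ultimately show ?thesis
    using j window_cost_nonneg[of pol "Suc s" j] by auto
qed

context
  fixes \<sigma> :: real and pol :: policy
  assumes F_sub_additive: "sub_additive (\<sigma> / 2) \<gamma> (agg_delay \<gamma> Cd)" and \<sigma>_ge_2: "2 \<le> \<sigma>"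
begin

lemma discounted_delay_le_if_threshold_waits:
  assumes "s < j" and "j < M"
    and "queue_start \<beta> \<gamma> Cd ps j = s" and "queue_start \<beta> \<gamma> Cd ps (Suc j) = s"
    and W: "\<gamma> ^ j * (ps j * \<beta>) + \<gamma> ^ Suc j * agg_delay \<gamma> Cd (M - j) \<le> W"
  shows "\<gamma> ^ Suc s * agg_delay \<gamma> Cd (M - s) \<le> \<sigma> / 2 * W"
proof -
  have "agg_delay \<gamma> Cd (j - s + 1) \<le> \<gamma> ^ (j - s - 1) * \<beta> * ps j"
    using stage_cost_threshold_policy_waits(1)[OF assms(3,4,1)] by simp
  then have "\<gamma> ^ Suc s * agg_delay \<gamma> Cd (j - s + 1) \<le> \<gamma> ^ Suc s * (\<gamma> ^ (j - s - 1) * \<beta> * ps j)"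
    using \<gamma>_pos by (simp add: mult_left_mono)
  also have "\<dots> = \<gamma> ^ j * (ps j * \<beta>)"
    using power_Suc_mult_power_diff[OF \<open>s < j\<close>, of \<gamma>] by (simp add: algebra_simps)
  finally have delay_le_W:
    "\<gamma> ^ Suc s * agg_delay \<gamma> Cd (j - s + 1) + \<gamma> ^ Suc j * agg_delay \<gamma> Cd (M - j) \<le> W"
    using W by simp
  have "\<gamma> ^ Suc s * agg_delay \<gamma> Cd (M - s)
      \<le> \<sigma> / 2 * (\<gamma> ^ Suc s * agg_delay \<gamma> Cd (j - s + 1) + \<gamma> ^ Suc j * agg_delay \<gamma> Cd (M - j))"
    using F_sub_additive \<gamma>_pos assms(1,2) by (intro sub_additive_discounted) auto
  also have "\<dots> \<le> \<sigma> / 2 * W"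
    using delay_le_W \<sigma>_ge_2 by (intro mult_left_mono) auto
  finally show ?thesis .
qed

lemma open_epoch_cost_le:
  assumes "s < N" and start: "\<And>u. s < u \<Longrightarrow> u \<le> N \<Longrightarrow> queue_start \<beta> \<gamma> Cd ps u = s"
  shows "window_cost \<beta> \<gamma> Cd (threshold_policy \<beta> \<gamma> Cd) ps (Suc s) N
    \<le> \<sigma> / 2 * window_cost \<beta> \<gamma> Cd pol ps (Suc s) N"
proof -
  have "\<gamma> ^ Suc s * agg_delay \<gamma> Cd (N - s) \<le> \<sigma> / 2 * window_cost \<beta> \<gamma> Cd pol ps (Suc s) N"
    using window_cost_lower_bound[OF \<open>s < N\<close>, of pol]
  proof (elim disjE exE conjE)
    assume "\<gamma> ^ Suc s * agg_delay \<gamma> Cd (N - s) \<le> window_cost \<beta> \<gamma> Cd pol ps (Suc s) N"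
    moreover have "window_cost \<beta> \<gamma> Cd pol ps (Suc s) N \<le> \<sigma> / 2 * window_cost \<beta> \<gamma> Cd pol ps (Suc s) N"
      using \<sigma>_ge_2 window_cost_nonneg[of pol "Suc s" N] mult_right_mono[of 1 "\<sigma> / 2"] by simp
    ultimately show ?thesis
      by linarith
  next
    fix j
    assume "s < j" "j < N"
      "\<gamma> ^ j * (ps j * \<beta>) + \<gamma> ^ Suc j * agg_delay \<gamma> Cd (N - j) \<le> window_cost \<beta> \<gamma> Cd pol ps (Suc s) N"
    then show ?thesis
      by (intro discounted_delay_le_if_threshold_waits) (auto intro: start)
  qed
  then show ?thesis
    using window_cost_threshold_policy_waits[OF assms] by simp
qed

lemma closed_epoch_threshold_cost_le:
  assumes "s < N" and start: "\<And>u. s < u \<Longrightarrow> u \<le> N \<Longrightarrow> queue_start \<beta> \<gamma> Cd ps u = s"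
    and publish: "queue_start \<beta> \<gamma> Cd ps (Suc N) = N"
  shows "window_cost \<beta> \<gamma> Cd (threshold_policy \<beta> \<gamma> Cd) ps (Suc s) (Suc N)
    \<le> 2 * (\<gamma> ^ Suc s * agg_delay \<gamma> Cd (Suc N - s))"
proof -
  have start_N: "queue_start \<beta> \<gamma> Cd ps N = s"
    using assms by simp
  have "\<gamma> ^ N * (ps N * \<beta>) = \<gamma> ^ Suc s * (\<gamma> ^ (N - s - 1) * \<beta> * ps N)"
    using power_Suc_mult_power_diff[OF \<open>s < N\<close>, of \<gamma>] by (simp add: algebra_simps)
  also have "\<dots> \<le> \<gamma> ^ Suc s * agg_delay \<gamma> Cd (Suc N - s)"
    using stage_cost_threshold_policy_publishes(1)[OF start_N publish \<open>s < N\<close>] \<gamma>_pos \<open>s < N\<close>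
    by (simp add: mult_left_mono Suc_diff_le)
  finally have publish_le: "\<gamma> ^ N * (ps N * \<beta>) \<le> \<gamma> ^ Suc s * agg_delay \<gamma> Cd (Suc N - s)" .
  have wait_le: "\<gamma> ^ Suc s * agg_delay \<gamma> Cd (N - s) \<le> \<gamma> ^ Suc s * agg_delay \<gamma> Cd (Suc N - s)"
    using \<gamma>_pos by (intro mult_left_mono agg_delay_mono) auto
  have "window_cost \<beta> \<gamma> Cd (threshold_policy \<beta> \<gamma> Cd) ps (Suc s) (Suc N)
      = \<gamma> ^ Suc s * agg_delay \<gamma> Cd (N - s) + \<gamma> ^ N * (ps N * \<beta>)"
    using assms stage_cost_threshold_policy_publishes(2)[OF start_N publish \<open>s < N\<close>]
    by (simp add: window_cost_Suc window_cost_threshold_policy_waits)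
  with publish_le wait_le show ?thesis
    by linarith
qed

lemma closed_epoch_cost_le:
  assumes "s < N" and start: "\<And>u. s < u \<Longrightarrow> u \<le> N \<Longrightarrow> queue_start \<beta> \<gamma> Cd ps u = s"
    and publish: "queue_start \<beta> \<gamma> Cd ps (Suc N) = N"
  shows "window_cost \<beta> \<gamma> Cd (threshold_policy \<beta> \<gamma> Cd) ps (Suc s) (Suc N)
    \<le> \<sigma> * window_cost \<beta> \<gamma> Cd pol ps (Suc s) (Suc N)"
  using window_cost_lower_bound[OF less_SucI[OF \<open>s < N\<close>], of pol]
proof (elim disjE exE conjE)
  assume "\<gamma> ^ Suc s * agg_delay \<gamma> Cd (Suc N - s) \<le> window_cost \<beta> \<gamma> Cd pol ps (Suc s) (Suc N)"
  moreover have "2 * window_cost \<beta> \<gamma> Cd pol ps (Suc s) (Suc N) \<le> \<sigma> * window_cost \<beta> \<gamma> Cd pol ps (Suc s) (Suc N)"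
    using \<sigma>_ge_2 window_cost_nonneg by (intro mult_right_mono)
  ultimately show ?thesis
    using closed_epoch_threshold_cost_le[OF assms] by linarith
next
  fix j
  assume j: "s < j" "j < Suc N" "pol j (ps j) (queue pol ps j) \<noteq> {}"
    and W: "\<gamma> ^ j * (ps j * \<beta>) + \<gamma> ^ Suc j * agg_delay \<gamma> Cd (Suc N - j)
      \<le> window_cost \<beta> \<gamma> Cd pol ps (Suc s) (Suc N)"
  show ?thesis
  proof (cases "j = N")
    case True
    have "window_cost \<beta> \<gamma> Cd (threshold_policy \<beta> \<gamma> Cd) ps (Suc s) N
        \<le> \<sigma> / 2 * window_cost \<beta> \<gamma> Cd pol ps (Suc s) N"
      using assms(1,2) by (rule open_epoch_cost_le)
    also have "\<dots> \<le> \<sigma> * window_cost \<beta> \<gamma> Cd pol ps (Suc s) N"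
      using \<sigma>_ge_2 window_cost_nonneg by (intro mult_right_mono) auto
    finally have before_N: "window_cost \<beta> \<gamma> Cd (threshold_policy \<beta> \<gamma> Cd) ps (Suc s) N
        \<le> \<sigma> * window_cost \<beta> \<gamma> Cd pol ps (Suc s) N" .
    have "stage_cost \<beta> Cd (threshold_policy \<beta> \<gamma> Cd) ps N \<le> stage_cost \<beta> Cd pol ps N"
      using stage_cost_threshold_policy_publishes(2)[OF start[OF \<open>s < N\<close> order_refl] publish \<open>s < N\<close>]
        pub_cost_le_stage_cost j(3) True by simp
    then have "\<gamma> ^ N * stage_cost \<beta> Cd (threshold_policy \<beta> \<gamma> Cd) ps N \<le> \<gamma> ^ N * stage_cost \<beta> Cd pol ps N"
      using \<gamma>_pos by (simp add: mult_left_mono)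
    also have "\<dots> \<le> \<sigma> * (\<gamma> ^ N * stage_cost \<beta> Cd pol ps N)"
      using \<sigma>_ge_2 \<gamma>_pos stage_cost_nonneg[of pol N] mult_right_mono[of 1 \<sigma> "\<gamma> ^ N * stage_cost \<beta> Cd pol ps N"]
      by simp
    finally show ?thesis
      using before_N \<open>s < N\<close> by (simp add: window_cost_Suc distrib_left)
  next
    case False
    then have "\<gamma> ^ Suc s * agg_delay \<gamma> Cd (Suc N - s) \<le> \<sigma> / 2 * window_cost \<beta> \<gamma> Cd pol ps (Suc s) (Suc N)"
      using j W by (intro discounted_delay_le_if_threshold_waits[of s j]) (auto intro: start)
    then show ?thesis
      using closed_epoch_threshold_cost_le[OF assms] by linarith
  qed
qed

lemma threshold_prefix_cost_le:
  assumes "queue_start \<beta> \<gamma> Cd ps (Suc t) = t"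
  shows "window_cost \<beta> \<gamma> Cd (threshold_policy \<beta> \<gamma> Cd) ps 0 (Suc t)
    \<le> \<sigma> * window_cost \<beta> \<gamma> Cd pol ps 0 (Suc t)"
  using assms
proof (induction t rule: less_induct)
  case (less t)
  show ?case
  proof (cases "t = 0")
    case True
    then show ?thesis
      using \<sigma>_ge_2 stage_cost_nonneg[of pol 0]
      by (simp add: window_cost_def stage_cost_threshold_policy_idle)
  next
    case False
    define s where "s = queue_start \<beta> \<gamma> Cd ps t"
    have "s < t"
      using False by (simp add: s_def queue_start_less)
    have start: "\<And>u. s < u \<Longrightarrow> u \<le> t \<Longrightarrow> queue_start \<beta> \<gamma> Cd ps u = s"
      by (rule queue_start_eq_between[OF s_def[symmetric]])
    have "window_cost \<beta> \<gamma> Cd (threshold_policy \<beta> \<gamma> Cd) ps 0 (Suc s)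
        \<le> \<sigma> * window_cost \<beta> \<gamma> Cd pol ps 0 (Suc s)"
      using \<open>s < t\<close> start[of "Suc s"] by (intro less.IH) auto
    moreover have "window_cost \<beta> \<gamma> Cd (threshold_policy \<beta> \<gamma> Cd) ps (Suc s) (Suc t)
        \<le> \<sigma> * window_cost \<beta> \<gamma> Cd pol ps (Suc s) (Suc t)"
      using \<open>s < t\<close> start less.prems by (rule closed_epoch_cost_le)
    ultimately show ?thesis
      using \<open>s < t\<close> by (simp add: window_cost_split[of 0 "Suc s" "Suc t"] distrib_left)
  qed
qed

lemma threshold_partial_cost_le:
  "window_cost \<beta> \<gamma> Cd (threshold_policy \<beta> \<gamma> Cd) ps 0 N \<le> \<sigma> * window_cost \<beta> \<gamma> Cd pol ps 0 N"
proof (cases "N = 0")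
  case True
  then show ?thesis
    by (simp add: window_cost_def)
next
  case False
  define s where "s = queue_start \<beta> \<gamma> Cd ps N"
  have "s < N"
    using False by (simp add: s_def queue_start_less)
  have start: "\<And>u. s < u \<Longrightarrow> u \<le> N \<Longrightarrow> queue_start \<beta> \<gamma> Cd ps u = s"
    by (rule queue_start_eq_between[OF s_def[symmetric]])
  have "window_cost \<beta> \<gamma> Cd (threshold_policy \<beta> \<gamma> Cd) ps 0 (Suc s)
      \<le> \<sigma> * window_cost \<beta> \<gamma> Cd pol ps 0 (Suc s)"
    using \<open>s < N\<close> start[of "Suc s"] by (intro threshold_prefix_cost_le) auto
  moreover have "window_cost \<beta> \<gamma> Cd (threshold_policy \<beta> \<gamma> Cd) ps (Suc s) N
      \<le> \<sigma> / 2 * window_cost \<beta> \<gamma> Cd pol ps (Suc s) N"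
    using \<open>s < N\<close> start by (rule open_epoch_cost_le)
  moreover have "\<dots> \<le> \<sigma> * window_cost \<beta> \<gamma> Cd pol ps (Suc s) N"
    using \<sigma>_ge_2 window_cost_nonneg by (intro mult_right_mono) auto
  ultimately show ?thesis
    using \<open>s < N\<close> by (simp add: window_cost_split[of 0 "Suc s" N] distrib_left)
qed

end

lemma agg_delay_eq_0_if_sub_additive:
  assumes "sub_additive c \<gamma> (agg_delay \<gamma> Cd)" and "c < 1"
  shows "agg_delay \<gamma> Cd n = 0"
proof -
  have sub: "\<And>n1 n2. 1 \<le> n1 \<Longrightarrow> 1 \<le> n2 \<Longrightarrow>
      agg_delay \<gamma> Cd (n1 + n2) \<le> c * (agg_delay \<gamma> Cd (n1 + 1) + \<gamma> ^ n1 * agg_delay \<gamma> Cd n2)"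
    using assms(1) unfolding sub_additive_def by blast
  have F1: "agg_delay \<gamma> Cd 1 = 0"
    by (simp add: agg_delay_def)
  have "agg_delay \<gamma> Cd 2 \<le> c * agg_delay \<gamma> Cd 2"
    using sub[of 1 1] F1 by (simp add: numeral_2_eq_2)
  then have F2: "agg_delay \<gamma> Cd 2 = 0"
    using \<open>c < 1\<close> agg_delay_nonneg[of 2] mult_right_mono[of c 1 "agg_delay \<gamma> Cd 2"] by simp
  show ?thesis
  proof (induction n)
    case (Suc n)
    show ?case
    proof (cases "n = 0")
      case False
      then show ?thesis
        using sub[of 1 n] F2 Suc.IH agg_delay_nonneg[of "Suc n"] by (simp add: numeral_2_eq_2)
    qed (use F1 in simp)
  qed (simp add: agg_delay_def)
qed

lemma stage_cost_threshold_policy_eq_0: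
  assumes "sub_additive c \<gamma> (agg_delay \<gamma> Cd)" and "c < 1"
  shows "stage_cost \<beta> Cd (threshold_policy \<beta> \<gamma> Cd) ps t = 0"
proof -
  have F0: "\<And>n. agg_delay \<gamma> Cd n = 0"
    using assms by (rule agg_delay_eq_0_if_sub_additive)
  have D0: "cum_delay Cd n = 0" if "0 < n" for n
  proof -
    have "agg_delay \<gamma> Cd (Suc n) = agg_delay \<gamma> Cd n + \<gamma> ^ (n - 1) * cum_delay Cd n"
      using that by (simp add: agg_delay_eq_sum_cum_delay)
    then show ?thesis
      using F0 \<gamma>_pos by simp
  qed
  define s where "s = queue_start \<beta> \<gamma> Cd ps t"
  consider "s = t" | "s < t" "queue_start \<beta> \<gamma> Cd ps (Suc t) = t" | "s < t" "queue_start \<beta> \<gamma> Cd ps (Suc t) = s"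
  proof -
    have "s \<le> t" and "queue_start \<beta> \<gamma> Cd ps (Suc t) = t \<or> queue_start \<beta> \<gamma> Cd ps (Suc t) = s"
      unfolding s_def by (simp_all add: queue_start_le queue_start.simps(2) Let_def)
    then show thesis
      using that by (cases "s = t") auto
  qed
  then show ?thesis
  proof cases
    case 1
    then show ?thesis
      unfolding s_def by (rule stage_cost_threshold_policy_idle)
  next
    case 2
    then have "\<gamma> ^ (t - s - 1) * (\<beta> * ps t) \<le> 0"
      using stage_cost_threshold_policy_publishes(1)[OF s_def[symmetric]] F0 by (simp add: mult.assoc)
    moreover have "0 < \<gamma> ^ (t - s - 1)"
      using \<gamma>_pos by simp
    ultimately have "\<beta> * ps t = 0"
      using \<beta>_nonneg ps_nonneg[of t] by (auto simp: mult_le_0_iff)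
    then show ?thesis
      using 2 stage_cost_threshold_policy_publishes(2)[OF s_def[symmetric]] by (simp add: mult.commute)
  next
    case 3
    then show ?thesis
      using D0 stage_cost_threshold_policy_waits(2)[OF s_def[symmetric]] by simp
  qed
qed

lemma threshold_path_cost_le:
  assumes "sub_additive (\<sigma> / 2) \<gamma> (agg_delay \<gamma> Cd)"
  shows "(\<Sum>t. ennreal (\<gamma> ^ t * stage_cost \<beta> Cd (threshold_policy \<beta> \<gamma> Cd) ps t))
    \<le> ennreal \<sigma> * (\<Sum>t. ennreal (\<gamma> ^ t * stage_cost \<beta> Cd pol ps t))"
proof (cases "\<sigma> < 2")
  case True
  then show ?thesis
    using stage_cost_threshold_policy_eq_0[OF assms] by simp
next
  case False
  have partial_sum: "(\<Sum>t<N. ennreal (\<gamma> ^ t * stage_cost \<beta> Cd pol' ps t))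
      = ennreal (window_cost \<beta> \<gamma> Cd pol' ps 0 N)" for pol' N
    using \<gamma>_pos stage_cost_nonneg by (simp add: window_cost_def atLeast0LessThan)
  show ?thesis
    unfolding suminf_eq_SUP
  proof (rule SUP_least)
    fix N
    have "ennreal (window_cost \<beta> \<gamma> Cd (threshold_policy \<beta> \<gamma> Cd) ps 0 N)
        \<le> ennreal (\<sigma> * window_cost \<beta> \<gamma> Cd pol ps 0 N)"
      using assms False by (intro ennreal_leI threshold_partial_cost_le) auto
    also have "\<dots> = ennreal \<sigma> * (\<Sum>t<N. ennreal (\<gamma> ^ t * stage_cost \<beta> Cd pol ps t))"
      using False window_cost_nonneg by (simp add: partial_sum ennreal_mult)
    also have "\<dots> \<le> ennreal \<sigma> * (SUP N. \<Sum>t<N. ennreal (\<gamma> ^ t * stage_cost \<beta> Cd pol ps t))"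
      by (intro mult_left_mono SUP_upper) auto
    finally show "(\<Sum>t<N. ennreal (\<gamma> ^ t * stage_cost \<beta> Cd (threshold_policy \<beta> \<gamma> Cd) ps t))
        \<le> ennreal \<sigma> * (SUP N. \<Sum>t<N. ennreal (\<gamma> ^ t * stage_cost \<beta> Cd pol ps t))"
      by (simp add: partial_sum)
  qed
qed

end

text \<open>Unlike \<open>nn_integral_cmult\<close>, this needs no measurability of \<open>f\<close>, which is unknown for the
  path costs.\<close>

lemma nn_integral_cmult_le:
  fixes c :: real
  shows "(\<integral>\<^sup>+x. ennreal c * f x \<partial>M) \<le> ennreal c * integral\<^sup>N M f"
proof (cases "0 < c")
  case False
  then have "ennreal c = 0"
    by (simp add: ennreal_eq_0_iff)
  then show ?thesis
    by simp
next
  case True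
  have cc: "ennreal c * ennreal (1 / c) = 1"
    using True by (simp flip: ennreal_mult)
  show ?thesis
    unfolding nn_integral_def
  proof (rule SUP_least)
    fix g
    assume g: "g \<in> {g. simple_function M g \<and> g \<le> (\<lambda>x. ennreal c * f x)}"
    define h where "h x = ennreal (1 / c) * g x" for x
    have h: "simple_function M h"
      using g unfolding h_def by (intro simple_function_mult) auto
    have "h x \<le> f x" for x
    proof -
      have "h x \<le> ennreal (1 / c) * (ennreal c * f x)"
        using g unfolding h_def by (intro mult_left_mono) (auto simp: le_fun_def)
      also have "\<dots> = f x"
        using cc by (simp add: mult.assoc[symmetric] mult.commute)
      finally show ?thesis .
    qed
    moreover have "(\<lambda>x. ennreal c * h x) = g"
      using cc by (simp add: h_def mult.assoc[symmetric])
    then have "integral\<^sup>S M g = ennreal c * integral\<^sup>S M h"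
      using simple_integral_mult[OF h, of c] by simp
    ultimately show "integral\<^sup>S M g \<le> ennreal c * (SUP g\<in>{g. simple_function M g \<and> g \<le> f}. integral\<^sup>S M g)"
      using h by (auto intro!: mult_left_mono SUP_upper simp: le_fun_def)
  qed
qed

theorem theorem2:
  fixes M :: "'w measure" and P0 :: real and R :: "nat \<Rightarrow> 'w \<Rightarrow> real \<Rightarrow> real"
    and \<beta> \<gamma> \<sigma> :: real and Cd :: "nat \<Rightarrow> real" and pstar :: policy
  assumes "prob_space M"
    and "prob_space.indep_vars M (\<lambda>_. Pi\<^sub>M UNIV (\<lambda>_::real. borel)) R UNIV"
    and "\<And>t. distr M (Pi\<^sub>M UNIV (\<lambda>_::real. borel)) (R t) = distr M (Pi\<^sub>M UNIV (\<lambda>_::real. borel)) (R 0)"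
    and "\<And>w t. w \<in> space M \<Longrightarrow> price P0 R w t \<ge> 0"
    and "\<beta> \<ge> 0" and "0 < \<gamma>" and "\<gamma> < 1"
    and "\<And>i. Cd i \<ge> 0"
    and "sub_additive (\<sigma> / 2) \<gamma> (agg_delay \<gamma> Cd)"
    and "optimal_policy M P0 R \<beta> \<gamma> Cd pstar"
  shows "total_cost M P0 R \<beta> \<gamma> Cd (threshold_policy \<beta> \<gamma> Cd)
           \<le> ennreal \<sigma> * total_cost M P0 R \<beta> \<gamma> Cd pstar"
proof -
  have "(\<Sum>t. ennreal (\<gamma> ^ t * stage_cost \<beta> Cd (threshold_policy \<beta> \<gamma> Cd) (price P0 R w) t))
      \<le> ennreal \<sigma> * (\<Sum>t. ennreal (\<gamma> ^ t * stage_cost \<beta> Cd pstar (price P0 R w) t))"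
    if "w \<in> space M" for w
    by (rule threshold_path_cost_le[OF assms(5,6,8) assms(4)[OF that] assms(9)])
  then have "total_cost M P0 R \<beta> \<gamma> Cd (threshold_policy \<beta> \<gamma> Cd)
      \<le> (\<integral>\<^sup>+w. ennreal \<sigma> * (\<Sum>t. ennreal (\<gamma> ^ t * stage_cost \<beta> Cd pstar (price P0 R w) t)) \<partial>M)"
    unfolding total_cost_def by (rule nn_integral_mono)
  also have "\<dots> \<le> ennreal \<sigma> * total_cost M P0 R \<beta> \<gamma> Cd pstar"
    unfolding total_cost_def by (rule nn_integral_cmult_le)
  finally show ?thesis .
qed

end
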